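(* Let $u=(a,b,c)$ and $v=(a',b',c')$ be nonzero vectors in $\mathbb{Z}^3$ with $a^2+b^2+c^2=a'^2+b'^2+c'^2$, $aa'+bb'+cc'=0$ and $\gcd(a,b,c,a',b',c')=1$. Let $\square$ be the square $\mathrm{conv}\{0,u,v,u+v\}\subset\mathbb{R}^3$. Put $d=\gcd(a,b,c)$, $d'=\gcd(a',b',c')$ and $D=\gcd(bc'-b'c,\ ac'-a'c,\ ab'-a'b)$. Then the Ehrhart polynomial of $\square$ is $$E_\square(t)=Dt^2+(d+d')t+1.$$
   Context: For a polytope $P\subset\mathbb{R}^n$ with vertices in $\mathbb{Z}^n$, its Ehrhart polynomial $E_P$ is the polynomial satisfying $E_P(t)=\#(tP\cap\mathbb{Z}^n)$ for all positive integers $t$. *)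

theory Defs
  imports "HOL-Analysis.Analysis" "HOL-Computational_Algebra.Polynomial"
begin

definition lattice_points :: "(real^'n) set" where
  "lattice_points = {x. \<forall>i. x $ i \<in> \<int>}"

definition ehrhart_poly :: "(real^'n) set \<Rightarrow> real poly" where
  "ehrhart_poly P = (THE p. \<forall>t::nat. t > 0 \<longrightarrow>
      poly p (real t) = real (card (((\<lambda>x. real t *\<^sub>R x) ` P) \<inter> lattice_points)))"

definition int_vec3 :: "int \<Rightarrow> int \<Rightarrow> int \<Rightarrow> real^3" where
  "int_vec3 a b c = vector [of_int a, of_int b, of_int c]"

end

theory Submission
  imports Defs
begin

text \<open>
  Write \<open>w = v \<times> u\<close> and \<open>N = |u|\<^sup>2 = |v|\<^sup>2\<close>. Since \<open>u\<close> and \<open>v\<close> are orthogonal, the lattice points of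
  \<open>t\<box>\<close> are the integer vectors \<open>x\<close> with \<open>x \<cdot> w = 0\<close>, \<open>0 \<le> x \<cdot> u \<le> tN\<close> and \<open>0 \<le> x \<cdot> v \<le> tN\<close>.
  If \<open>u = d u\<^sub>0\<close> and \<open>w = D w\<^sub>0\<close> with \<open>u\<^sub>0\<close>, \<open>w\<^sub>0\<close> primitive and \<open>p \<cdot> u\<^sub>0 = 1\<close>, then
  \<open>z = p \<times> w\<^sub>0\<close> and \<open>u\<^sub>0\<close> form a basis of the plane lattice \<open>w\<^sup>\<perp> \<inter> \<int>\<^sup>3\<close>, and \<open>D = d e\<close> with
  \<open>e (z \<cdot> v) = N\<close>. In the coordinates \<open>j z + k u\<^sub>0\<close> the strip \<open>0 \<le> x \<cdot> u < tN\<close> consists of the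
  rows \<open>0 \<le> j \<le> te\<close>, each a window of \<open>td\<close> consecutive values of \<open>k\<close>; the remaining edge
  \<open>x \<cdot> u = tN\<close> is a segment of lattice length \<open>td'\<close>. This gives \<open>Dt\<^sup>2 + (d + d')t + 1\<close> points
  for every \<open>t > 0\<close>, which determines the Ehrhart polynomial.
\<close>

text \<open>Integer vectors are triples, so that \<open>0\<close>, \<open>+\<close> and \<open>-\<close> come from the componentwise
  instances on products.\<close>

type_synonym ivec = "int \<times> int \<times> int"

fun dot :: "ivec \<Rightarrow> ivec \<Rightarrow> int" where
  "dot (a, b, c) (x, y, z) = a * x + b * y + c * z"

fun cross :: "ivec \<Rightarrow> ivec \<Rightarrow> ivec" where
  "cross (a, b, c) (x, y, z) = (b * z - c * y, c * x - a * z, a * y - b * x)"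

fun smul :: "int \<Rightarrow> ivec \<Rightarrow> ivec" where
  "smul k (a, b, c) = (k * a, k * b, k * c)"

fun vgcd :: "ivec \<Rightarrow> int" where
  "vgcd (a, b, c) = gcd a (gcd b c)"

lemma ivec_eq_0_iff [simp]: "(a, b, c) = (0 :: ivec) \<longleftrightarrow> a = 0 \<and> b = 0 \<and> c = 0"
  by (simp add: zero_prod_def)

lemma dot_smul_left [simp]: "dot (smul k x) y = k * dot x y"
  and dot_smul_right [simp]: "dot x (smul k y) = k * dot x y"
  and dot_add_left [simp]: "dot (x + y) z = dot x z + dot y z"
  and dot_diff_left [simp]: "dot (x - y) z = dot x z - dot y z"
  and dot_zero_right [simp]: "dot x 0 = 0"
  and dot_commute: "dot x y = dot y x"
  by (cases x rule: prod_cases3; cases y rule: prod_cases3; cases z rule: prod_cases3;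
      simp add: zero_prod_def algebra_simps)+

lemma cross_smul_left [simp]: "cross (smul k x) y = smul k (cross x y)"
  and cross_smul_right [simp]: "cross x (smul k y) = smul k (cross x y)"
  and cross_add_left [simp]: "cross (x + y) z = cross x z + cross y z"
  and cross_diff_left [simp]: "cross (x - y) z = cross x z - cross y z"
  and cross_uminus_left [simp]: "cross (- x) y = - cross x y"
  and cross_zero_left [simp]: "cross 0 y = 0"
  and cross_self [simp]: "cross x x = 0"
  and cross_commute: "cross y x = - cross x y"
  by (cases x rule: prod_cases3; cases y rule: prod_cases3; cases z rule: prod_cases3;
      simp add: zero_prod_def algebra_simps)+

lemma dot_cross_eq_0 [simp]: "dot a (cross a b) = 0" "dot b (cross a b) = 0"
  by (cases a rule: prod_cases3; cases b rule: prod_cases3; simp add: algebra_simps)+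

lemma cross_cross_expand: "cross (cross a b) c = smul (dot a c) b - smul (dot b c) a"
  by (cases a rule: prod_cases3; cases b rule: prod_cases3; cases c rule: prod_cases3;
      simp add: algebra_simps)

lemma dot_cross_cross: "dot (cross a b) (cross a b) = dot a a * dot b b - (dot a b)\<^sup>2"
  by (cases a rule: prod_cases3; cases b rule: prod_cases3; simp add: algebra_simps power2_eq_square)

lemma smul_one [simp]: "smul 1 x = x"
  and smul_zero [simp]: "smul 0 x = 0"
  and smul_zero_right [simp]: "smul k 0 = 0"
  and smul_uminus [simp]: "smul (- k) x = - smul k x"
  by (cases x rule: prod_cases3; simp add: zero_prod_def)+

lemma smul_eq_0_iff [simp]: "smul k x = 0 \<longleftrightarrow> k = 0 \<or> x = 0"
  by (cases x rule: prod_cases3) auto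

lemma smul_right_cancel: "smul k x = smul l x \<longleftrightarrow> k = l \<or> x = 0"
  by (cases x rule: prod_cases3) auto

lemma dot_self_pos:
  assumes "x \<noteq> 0"
  shows "dot x x > 0"
  using assms by (cases x rule: prod_cases3) (simp, smt (verit) sum_squares_gt_zero_iff zero_le_square)

lemma vgcd_smul: "vgcd (smul k x) = \<bar>k\<bar> * vgcd x"
proof (cases x rule: prod_cases3)
  case (fields a b c)
  have "gcd (k * b) (k * c) = \<bar>k * gcd b c\<bar>"
    by (simp add: gcd_mult_distrib_int[symmetric] abs_mult)
  then show ?thesis
    using fields by (simp add: gcd_mult_distrib_int)
qed

lemma vgcd_nonneg: "vgcd x \<ge> 0"
  by (cases x rule: prod_cases3) simp

lemma vgcd_pos: "x \<noteq> 0 \<Longrightarrow> vgcd x > 0"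
  by (cases x rule: prod_cases3) (simp add: gcd_pos_int)

lemma bezout_vgcd: "\<exists>p. dot p x = vgcd x"
proof (cases x rule: prod_cases3)
  case (fields a b c)
  obtain r s where rs: "r * a + s * gcd b c = gcd a (gcd b c)"
    using bezout_int by blast
  obtain r' s' where rs': "r' * b + s' * c = gcd b c"
    using bezout_int by blast
  have "dot (r, s * r', s * s') x = r * a + s * (r' * b + s' * c)"
    using fields by (simp add: algebra_simps)
  also have "\<dots> = vgcd x"
    using fields rs rs' by simp
  finally show ?thesis ..
qed

lemma primitive_decomposition:
  assumes "x \<noteq> 0"
  obtains x0 p where "x = smul (vgcd x) x0" and "dot p x0 = 1"
proof -
  obtain a b c where x: "x = (a, b, c)"
    by (cases x rule: prod_cases3)
  define g where "g = vgcd x"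
  have "g dvd a" "g dvd b" "g dvd c"
    using x unfolding g_def by (auto intro: dvd_trans)
  then obtain a0 b0 c0 where "a = g * a0" "b = g * b0" "c = g * c0"
    by (elim dvdE)
  then have x0: "x = smul g (a0, b0, c0)"
    using x by simp
  have "g > 0"
    using assms unfolding g_def by (rule vgcd_pos)
  moreover have "vgcd x = g * vgcd (a0, b0, c0)"
    using \<open>g > 0\<close> by (simp only: x0 vgcd_smul abs_of_pos)
  ultimately have "vgcd (a0, b0, c0) = 1"
    unfolding g_def by simp
  then obtain p where "dot p (a0, b0, c0) = 1"
    using bezout_vgcd by metis
  with x0 show thesis
    unfolding g_def by (rule that)
qed

lemma eq_smul_if_cross_eq_0:
  assumes "dot p v = 1" and "cross y v = 0"
  shows "y = smul (dot p y) v"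
proof -
  have "0 = - cross (- cross y v) p"
    using assms(2) by simp
  also have "\<dots> = smul (dot p y) v - y"
    using assms(1) by (simp add: cross_commute[of v y] cross_cross_expand dot_commute)
  finally show ?thesis
    by simp
qed

lemma cross_eq_0_if_orthogonal:
  assumes "dot u v = 0" and "u \<noteq> 0" and "dot y (cross v u) = 0" and "dot y u = 0"
  shows "cross v y = 0"
proof -
  have "smul (- dot u u) (cross v y) = cross (cross (cross v u) u) y"
    using assms(1) by (simp add: cross_cross_expand dot_commute)
  also have "\<dots> = smul (dot (cross v u) y) u - smul (dot u y) (cross v u)"
    by (rule cross_cross_expand)
  also have "\<dots> = 0"
    using assms(3,4) by (simp add: dot_commute)
  finally show ?thesis
    using dot_self_pos[OF assms(2)] by simp
qed

lemma eq_0_if_orthogonal: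
  assumes "dot u v = 0" and "u \<noteq> 0" and "v \<noteq> 0"
    and "dot y (cross v u) = 0" and "dot y u = 0" and "dot y v = 0"
  shows "y = 0"
proof -
  have "cross v y = 0"
    using assms(1,2,4,5) by (rule cross_eq_0_if_orthogonal)
  then have "smul (dot v v) y = 0"
    using cross_cross_expand[of v y v] assms(6) by (simp add: dot_commute)
  then show ?thesis
    using dot_self_pos[OF assms(3)] by simp
qed

lemma in_plane_iff:
  assumes "dot u v = 0" and "dot u u = N" and "dot v v = N" and "N \<noteq> 0"
  shows "smul N x = smul (dot x u) u + smul (dot x v) v \<longleftrightarrow> dot x (cross v u) = 0"
proof
  assume "smul N x = smul (dot x u) u + smul (dot x v) v"
  from arg_cong[OF this, of "\<lambda>y. dot y (cross v u)"] show "dot x (cross v u) = 0"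
    using assms(4) by simp
next
  assume "dot x (cross v u) = 0"
  have "u \<noteq> 0" "v \<noteq> 0"
    using assms by auto
  have "smul N x - smul (dot x u) u - smul (dot x v) v = 0"
    using assms \<open>dot x (cross v u) = 0\<close>
    by (intro eq_0_if_orthogonal[OF assms(1) \<open>u \<noteq> 0\<close> \<open>v \<noteq> 0\<close>]) (simp_all add: dot_commute[of v u])
  then show "smul N x = smul (dot x u) u + smul (dot x v) v"
    by (simp add: algebra_simps)
qed

lemma plane_basis:
  assumes p: "dot p u = 1" and q: "dot q w = 1" and wu: "dot w u = 0"
  shows "cross (cross p w) u = w"
    and "bij_betw (\<lambda>(j, k). smul j (cross p w) + smul k u) UNIV {x. dot x w = 0}"
proof -
  define z where "z = cross p w"
  show zu: "cross (cross p w) u = w"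
    using p wu by (simp add: cross_cross_expand)
  have "w \<noteq> 0" "u \<noteq> 0"
    using p q by auto
  show "bij_betw (\<lambda>(j, k). smul j (cross p w) + smul k u) UNIV {x. dot x w = 0}"
    unfolding z_def[symmetric]
  proof (rule bij_betwI')
    fix jk jk' :: "int \<times> int"
    obtain j k j' k' where jk: "jk = (j, k)" "jk' = (j', k')"
      by fastforce
    have "smul j z + smul k u = smul j' z + smul k' u \<longleftrightarrow> j = j' \<and> k = k'"
    proof
      assume eq: "smul j z + smul k u = smul j' z + smul k' u"
      have "cross (smul i z + smul l u) u = smul i w" for i l
        using zu unfolding z_def by simp
      then have "smul j w = smul j' w"
        by (metis eq)
      then have "j = j'"
        using \<open>w \<noteq> 0\<close> by (simp add: smul_right_cancel)
      with eq \<open>u \<noteq> 0\<close> show "j = j' \<and> k = k'"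
        by (simp add: smul_right_cancel)
    qed simp
    then show "((\<lambda>(j, k). smul j z + smul k u) jk = (\<lambda>(j, k). smul j z + smul k u) jk') = (jk = jk')"
      using jk by simp
  next
    fix jk :: "int \<times> int"
    show "(\<lambda>(j, k). smul j z + smul k u) jk \<in> {x. dot x w = 0}"
      using wu unfolding z_def by (cases jk) (simp add: dot_commute[of "cross p w"] dot_commute[of u])
  next
    fix x assume "x \<in> {x. dot x w = 0}"
    then have "cross (cross x u) w = 0"
      using wu by (simp add: cross_cross_expand dot_commute)
    then have xu: "cross x u = smul (dot q (cross x u)) w"
      by (rule eq_smul_if_cross_eq_0[OF q])
    define j where "j = dot q (cross x u)"
    define y where "y = x - smul j z"
    have "cross y u = 0"
      using xu zu unfolding y_def j_def z_def by simp
    then have "y = smul (dot p y) u"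
      by (rule eq_smul_if_cross_eq_0[OF p])
    then have "x = smul j z + smul (dot p y) u"
      unfolding y_def by (simp add: algebra_simps)
    then show "\<exists>jk\<in>UNIV. x = (\<lambda>(j, k). smul j z + smul k u) jk"
      by auto
  qed
qed

lemma window_eq_atLeastLessThan:
  fixes r M T :: int
  assumes "r > 0"
  shows "{k. 0 \<le> k * r + M \<and> k * r + M < T * r} = {- (M div r)..<T - M div r}"
proof -
  have "0 \<le> k * r + M \<longleftrightarrow> 0 \<le> (k * r + M) div r" for k
    using pos_imp_zdiv_nonneg_iff[OF assms] by simp
  then have lower: "0 \<le> k * r + M \<longleftrightarrow> - (M div r) \<le> k" for k
    using assms by (simp; arith)
  have "k * r + M < T * r \<longleftrightarrow> (k - T) * r + M < 0" for k
    by (simp add: left_diff_distrib; arith)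
  also have "\<dots> k \<longleftrightarrow> ((k - T) * r + M) div r < 0" for k
    using pos_imp_zdiv_neg_iff[OF assms] by simp
  finally have upper: "k * r + M < T * r \<longleftrightarrow> k < T - M div r" for k
    using assms by (simp; arith)
  show ?thesis
    using lower upper by auto
qed

lemma card_sheared_strip:
  fixes r m A B :: int
  assumes "r > 0" and "A \<ge> 0" and "B \<ge> 0"
  defines "W \<equiv> SIGMA j:{0..A}. {k. 0 \<le> k * r + j * m \<and> k * r + j * m < B * r}"
  shows "finite W" and "card W = nat (A + 1) * nat B"
  unfolding W_def window_eq_atLeastLessThan[OF assms(1)] using assms by simp_all

lemma plane_coordinates:
  assumes "u \<noteq> 0" and "v \<noteq> 0" and "dot u v = 0"
  obtains u0 z e where "u = smul (vgcd u) u0" and "dot u0 v = 0"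
    and "vgcd (cross v u) = vgcd u * e" and "e > 0" and "e * dot z v = dot v v"
    and "bij_betw (\<lambda>(j, k). smul j z + smul k u0) UNIV {x. dot x (cross v u) = 0}"
proof -
  define d where "d = vgcd u"
  define w where "w = cross v u"
  define D where "D = vgcd w"
  have "dot w w = dot v v * dot u u"
    unfolding w_def dot_cross_cross using assms(3) by (simp add: dot_commute)
  then have "w \<noteq> 0"
    using dot_self_pos[OF assms(1)] dot_self_pos[OF assms(2)] by auto
  then have "D > 0" and "d > 0"
    unfolding D_def d_def using assms(1) by (simp_all add: vgcd_pos)
  obtain u0 p where u0: "u = smul d u0" "dot p u0 = 1"
    using primitive_decomposition[OF assms(1)] unfolding d_def by metis
  obtain w0 q where w0: "w = smul D w0" "dot q w0 = 1"
    using primitive_decomposition[OF \<open>w \<noteq> 0\<close>] unfolding D_def by metis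
  have w_u0: "w = smul d (cross v u0)"
    unfolding w_def u0 by simp
  have De: "D = d * vgcd (cross v u0)"
    unfolding D_def w_u0 vgcd_smul using \<open>d > 0\<close> by simp
  have "D * (d * dot w0 u0) = dot w u"
    using u0(1) w0(1) by simp
  then have w0_u0: "dot w0 u0 = 0"
    using \<open>D > 0\<close> \<open>d > 0\<close> unfolding w_def by (simp add: dot_commute)
  have u0_v: "dot u0 v = 0"
    using assms(3) \<open>d > 0\<close> unfolding u0(1) by simp
  define z where "z = cross p w0"
  have z_u0: "cross z u0 = w0"
    and bij: "bij_betw (\<lambda>(j, k). smul j z + smul k u0) UNIV {x. dot x w0 = 0}"
    unfolding z_def using plane_basis[OF u0(2) w0(2) w0_u0] by blast+
  have "{x. dot x w0 = 0} = {x. dot x (cross v u) = 0}"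
    using w0(1) \<open>D > 0\<close> unfolding w_def by auto
  note bij = bij[unfolded this]
  have "cross (smul d v - smul D z) u0 = 0"
    using w_u0 w0(1) z_u0 by simp
  then have "smul d v - smul D z = smul (dot p (smul d v - smul D z)) u0"
    by (rule eq_smul_if_cross_eq_0[OF u0(2)])
  from arg_cong[OF this, of "\<lambda>x. dot x v"] have "d * dot v v = D * dot z v"
    using u0_v by simp
  then have "vgcd (cross v u0) * dot z v = dot v v"
    using \<open>d > 0\<close> unfolding De by simp
  moreover have "vgcd (cross v u0) > 0"
    using De \<open>D > 0\<close> \<open>d > 0\<close> by (simp add: zero_less_mult_iff)
  ultimately show thesis
    using that[OF u0(1)[unfolded d_def] u0_v _ _ _ bij] De unfolding D_def d_def w_def by blast
qed

lemma card_lattice_strip: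
  fixes u v :: ivec and N t :: int
  assumes "u \<noteq> 0" and "v \<noteq> 0" and "dot u v = 0" and "dot u u = N" and "dot v v = N"
    and "t \<ge> 0"
  defines "S \<equiv> {x. dot x (cross v u) = 0 \<and> 0 \<le> dot x u \<and> dot x u < t * N
                   \<and> 0 \<le> dot x v \<and> dot x v \<le> t * N}"
  shows "finite S" and "int (card S) = t\<^sup>2 * vgcd (cross v u) + t * vgcd u"
proof -
  obtain u0 z e where u0: "u = smul (vgcd u) u0" and u0_v: "dot u0 v = 0"
    and De: "vgcd (cross v u) = vgcd u * e" and "e > 0" and es: "e * dot z v = dot v v"
    and bij: "bij_betw (\<lambda>(j, k). smul j z + smul k u0) UNIV {x. dot x (cross v u) = 0}"
    using plane_coordinates[OF assms(1-3)] by blast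
  define f where "f = (\<lambda>(j, k). smul j z + smul k u0)"
  define d where "d = vgcd u"
  define r where "r = dot u0 u"
  define m where "m = dot z u"
  define s where "s = dot z v"
  have "N > 0" and "d > 0"
    using assms(1,4) dot_self_pos vgcd_pos unfolding d_def by blast+
  have "d * r = N"
    using assms(4) unfolding r_def d_def by (subst (asm) (1) u0) simp
  then have "r > 0" and dr: "(t * d) * r = t * N"
    using \<open>d > 0\<close> \<open>N > 0\<close> by (auto simp: zero_less_mult_iff)
  have es: "e * s = N"
    using es assms(5) unfolding s_def by simp
  then have "s > 0"
    using \<open>N > 0\<close> \<open>e > 0\<close> by (metis zero_less_mult_pos)
  have coords: "dot (f (j, k)) u = k * r + j * m" "dot (f (j, k)) v = j * s" for j k
    using u0_v unfolding f_def r_def m_def s_def by (simp_all add: algebra_simps)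
  have j_range: "0 \<le> j * s \<and> j * s \<le> t * N \<longleftrightarrow> j \<in> {0..t * e}" for j
    using \<open>s > 0\<close> unfolding es[symmetric]
    by (simp add: zero_le_mult_iff mult.assoc[symmetric] mult_le_cancel_right)
  let ?W = "SIGMA j:{0..t * e}. {k. 0 \<le> k * r + j * m \<and> k * r + j * m < (t * d) * r}"
  have "f (j, k) \<in> S \<longleftrightarrow> (j, k) \<in> ?W" for j k
    using j_range[of j] bij_betw_apply[OF bij, of "(j, k)"]
    unfolding S_def dr by (auto simp: f_def[symmetric] coords)
  then have "f -` S = ?W"
    by (simp add: set_eq_iff split_paired_All)
  moreover have "S \<subseteq> range f"
    using bij_betw_imp_surj_on[OF bij] unfolding S_def f_def by auto
  ultimately have S: "S = f ` ?W"
    by (metis image_vimage_eq inf.absorb1)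
  have W: "finite ?W" "card ?W = nat (t * e + 1) * nat (t * d)"
    using card_sheared_strip[OF \<open>r > 0\<close>] \<open>t \<ge> 0\<close> \<open>e > 0\<close> \<open>d > 0\<close> by simp_all
  then show "finite S"
    unfolding S by simp
  have "card S = nat (t * e + 1) * nat (t * d)"
    unfolding S using W bij_betw_imp_inj_on[OF bij] by (simp add: card_image f_def inj_on_subset)
  then show "int (card S) = t\<^sup>2 * vgcd (cross v u) + t * vgcd u"
    using \<open>t \<ge> 0\<close> \<open>e > 0\<close> \<open>d > 0\<close> unfolding De d_def[symmetric]
    by (simp add: algebra_simps power2_eq_square)
qed

lemma card_lattice_segment:
  fixes u v :: ivec and N t :: int
  assumes "u \<noteq> 0" and "v \<noteq> 0" and "dot u v = 0" and "dot u u = N" and "dot v v = N"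
    and "t \<ge> 0"
  shows "int (card {x. dot x (cross v u) = 0 \<and> dot x u = t * N \<and> 0 \<le> dot x v \<and> dot x v \<le> t * N})
    = t * vgcd v + 1"
proof -
  define d where "d = vgcd v"
  obtain v0 p where v0: "v = smul d v0" and p: "dot p v0 = 1"
    using primitive_decomposition[OF assms(2)] unfolding d_def by metis
  define r where "r = dot v0 v"
  have "d > 0" "N > 0"
    using assms(1,2,4) dot_self_pos vgcd_pos unfolding d_def by blast+
  have "d * r = N"
    using assms(5) unfolding r_def by (subst (asm) (1) v0) simp
  then have "r > 0" and tN: "t * N = (t * d) * r"
    using \<open>d > 0\<close> \<open>N > 0\<close> by (auto simp: zero_less_mult_iff)
  have k_range: "0 \<le> k * r \<and> k * r \<le> t * N \<longleftrightarrow> k \<in> {0..t * d}" for k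
    using \<open>r > 0\<close> unfolding tN by (simp add: zero_le_mult_iff mult_le_cancel_right)
  have v0_u: "dot v0 u = 0" and v0_w: "dot v0 (cross v u) = 0"
    using assms(3) \<open>d > 0\<close> dot_cross_eq_0(1)[of v u] unfolding v0 by (simp_all add: dot_commute)
  define g where "g k = smul t u + smul k v0" for k
  have g: "dot (g k) (cross v u) = 0" "dot (g k) u = t * N" "dot (g k) v = k * r" for k
    using v0_u v0_w assms(3,4) unfolding g_def r_def by simp_all
  have "{x. dot x (cross v u) = 0 \<and> dot x u = t * N \<and> 0 \<le> dot x v \<and> dot x v \<le> t * N}
      = g ` {0..t * d}"
  proof (intro set_eqI iffI)
    fix x assume x: "x \<in> {x. dot x (cross v u) = 0 \<and> dot x u = t * N \<and> 0 \<le> dot x v \<and> dot x v \<le> t * N}"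
    define y where "y = x - smul t u"
    have "dot y (cross v u) = 0" "dot y u = 0"
      using x assms(4) unfolding y_def by simp_all
    then have "cross v y = 0"
      by (rule cross_eq_0_if_orthogonal[OF assms(3,1)])
    then have "cross y v0 = 0"
      using \<open>d > 0\<close> unfolding v0 by (simp add: cross_commute[of y v0])
    then have "x = g (dot p y)"
      using eq_smul_if_cross_eq_0[OF p] unfolding g_def y_def by (metis add.commute diff_add_cancel)
    with x k_range show "x \<in> g ` {0..t * d}"
      by (auto simp: g)
  next
    fix x assume "x \<in> g ` {0..t * d}"
    then obtain k where "k \<in> {0..t * d}" and "x = g k"
      by blast
    then show "x \<in> {x. dot x (cross v u) = 0 \<and> dot x u = t * N \<and> 0 \<le> dot x v \<and> dot x v \<le> t * N}"
      using g k_range[of k] by simp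
  qed
  moreover have "inj g"
    using p by (auto intro!: injI simp: g_def smul_right_cancel)
  ultimately show ?thesis
    using \<open>t \<ge> 0\<close> \<open>d > 0\<close> unfolding d_def[symmetric] by (simp add: card_image inj_on_subset)
qed

lemma card_lattice_square:
  fixes u v :: ivec and N t :: int
  assumes "u \<noteq> 0" and "v \<noteq> 0" and "dot u v = 0" and "dot u u = N" and "dot v v = N"
    and "t \<ge> 0"
  shows "int (card {x. dot x (cross v u) = 0 \<and> 0 \<le> dot x u \<and> dot x u \<le> t * N
                      \<and> 0 \<le> dot x v \<and> dot x v \<le> t * N})
    = t\<^sup>2 * vgcd (cross v u) + t * (vgcd u + vgcd v) + 1"
proof -
  let ?S = "{x. dot x (cross v u) = 0 \<and> 0 \<le> dot x u \<and> dot x u < t * N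
                \<and> 0 \<le> dot x v \<and> dot x v \<le> t * N}"
  let ?E = "{x. dot x (cross v u) = 0 \<and> dot x u = t * N \<and> 0 \<le> dot x v \<and> dot x v \<le> t * N}"
  have S: "finite ?S" "int (card ?S) = t\<^sup>2 * vgcd (cross v u) + t * vgcd u"
    using card_lattice_strip[OF assms] by simp_all
  have E: "int (card ?E) = t * vgcd v + 1"
    using card_lattice_segment[OF assms] .
  then have "card ?E \<noteq> 0"
    using mult_nonneg_nonneg[OF \<open>t \<ge> 0\<close> vgcd_nonneg[of v]] by linarith
  then have "finite ?E"
    by (meson card.infinite)
  moreover have "{x. dot x (cross v u) = 0 \<and> 0 \<le> dot x u \<and> dot x u \<le> t * N
                    \<and> 0 \<le> dot x v \<and> dot x v \<le> t * N} = ?S \<union> ?E"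
    using \<open>t \<ge> 0\<close> by (auto simp: le_less)
  ultimately show ?thesis
    using S E by (simp add: card_Un_disjoint disjoint_iff algebra_simps)
qed

lemma convex_hull_parallelogram:
  fixes U V :: "'a::real_vector"
  shows "convex hull {0, U, V, U + V} = (\<lambda>(\<alpha>, \<beta>). \<alpha> *\<^sub>R U + \<beta> *\<^sub>R V) ` ({0..1} \<times> {0..1})"
proof -
  define f where "f = (\<lambda>(\<alpha>, \<beta>). \<alpha> *\<^sub>R U + \<beta> *\<^sub>R V)"
  have "linear f"
    unfolding f_def linear_iff by (auto simp: algebra_simps)
  have unit_interval: "convex hull {0, 1 :: real} = {0..1}"
    by (simp add: segment_convex_hull[symmetric] closed_segment_eq_real_ivl1)
  have "convex hull {0, U, V, U + V} = convex hull (f ` ({0, 1} \<times> {0, 1}))"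
    unfolding f_def by (simp add: insert_commute)
  also have "\<dots> = f ` (convex hull ({0, 1} \<times> {0, 1}))"
    by (rule convex_hull_linear_image[OF \<open>linear f\<close>, symmetric])
  also have "\<dots> = f ` ({0..1} \<times> {0..1})"
    by (simp only: convex_hull_Times unit_interval)
  finally show ?thesis
    unfolding f_def .
qed

lemma in_scaled_square_iff:
  fixes U V y :: "'a::real_inner"
  assumes "inner U V = 0" and "inner U U = N" and "inner V V = N" and "N > 0" and "T > 0"
  shows "y \<in> (\<lambda>x. T *\<^sub>R x) ` (convex hull {0, U, V, U + V}) \<longleftrightarrow>
    N *\<^sub>R y = inner y U *\<^sub>R U + inner y V *\<^sub>R V
    \<and> 0 \<le> inner y U \<and> inner y U \<le> T * N \<and> 0 \<le> inner y V \<and> inner y V \<le> T * N"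
  (is "_ \<longleftrightarrow> ?plane \<and> ?bounds")
proof
  assume "y \<in> (\<lambda>x. T *\<^sub>R x) ` (convex hull {0, U, V, U + V})"
  then obtain \<alpha> \<beta> where "(\<alpha>, \<beta>) \<in> {0..1} \<times> {0..1}" and y: "y = T *\<^sub>R (\<alpha> *\<^sub>R U + \<beta> *\<^sub>R V)"
    unfolding convex_hull_parallelogram image_image by fast
  then have \<alpha>: "0 \<le> \<alpha>" "\<alpha> \<le> 1" and \<beta>: "0 \<le> \<beta>" "\<beta> \<le> 1"
    by auto
  have yU: "inner y U = (T * N) * \<alpha>" and yV: "inner y V = (T * N) * \<beta>"
    using assms(1-3) unfolding y by (simp_all add: inner_add_left inner_commute[of V U])
  have "0 < T * N"
    using assms(4,5) by simp
  then have ?bounds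
    unfolding yU yV using \<alpha> \<beta> by (simp add: mult_left_le)
  moreover have ?plane
    unfolding yU yV by (simp add: y algebra_simps)
  ultimately show "?plane \<and> ?bounds"
    by blast
next
  assume H: "?plane \<and> ?bounds"
  have "0 < T * N"
    using assms(4,5) by simp
  define \<alpha> where "\<alpha> = inner y U / (T * N)"
  define \<beta> where "\<beta> = inner y V / (T * N)"
  have "0 \<le> \<alpha>" "\<alpha> \<le> 1" "0 \<le> \<beta>" "\<beta> \<le> 1"
    using H \<open>0 < T * N\<close> unfolding \<alpha>_def \<beta>_def by simp_all
  moreover have "y = T *\<^sub>R (\<alpha> *\<^sub>R U + \<beta> *\<^sub>R V)"
  proof -
    have "T *\<^sub>R (\<alpha> *\<^sub>R U + \<beta> *\<^sub>R V) = (1 / N) *\<^sub>R (inner y U *\<^sub>R U + inner y V *\<^sub>R V)"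
      using assms(5) unfolding \<alpha>_def \<beta>_def by (simp add: scaleR_add_right)
    also have "\<dots> = (1 / N) *\<^sub>R (N *\<^sub>R y)"
      by (simp only: conjunct1[OF H])
    also have "\<dots> = y"
      using assms(4) by simp
    finally show ?thesis ..
  qed
  ultimately show "y \<in> (\<lambda>x. T *\<^sub>R x) ` (convex hull {0, U, V, U + V})"
    unfolding convex_hull_parallelogram image_image by (auto intro!: image_eqI[where x = "(\<alpha>, \<beta>)"])
qed

fun vec3 :: "ivec \<Rightarrow> real^3" where
  "vec3 (a, b, c) = int_vec3 a b c"

lemma int_vec3_nth [simp]: "int_vec3 a b c $ 1 = a" "int_vec3 a b c $ 2 = b" "int_vec3 a b c $ 3 = c"
  by (simp_all add: int_vec3_def)

lemma inner_vec3 [simp]: "inner (vec3 x) (vec3 y) = of_int (dot x y)"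
  by (cases x rule: prod_cases3; cases y rule: prod_cases3) (simp add: inner_vec_def sum_3)

lemma vec3_smul [simp]: "vec3 (smul k x) = of_int k *\<^sub>R vec3 x"
  and vec3_add [simp]: "vec3 (x + y) = vec3 x + vec3 y"
  by (cases x rule: prod_cases3; cases y rule: prod_cases3; simp add: vec_eq_iff forall_3)+

lemma inj_vec3: "inj vec3"
proof (rule injI)
  fix x y assume "vec3 x = vec3 y"
  then show "x = y"
    by (cases x rule: prod_cases3; cases y rule: prod_cases3) (simp add: vec_eq_iff forall_3)
qed

lemma lattice_points_eq_range_vec3: "lattice_points = range vec3"
proof (intro set_eqI iffI)
  fix y :: "real^3" assume "y \<in> lattice_points"
  then have "y $ 1 \<in> \<int>" "y $ 2 \<in> \<int>" "y $ 3 \<in> \<int>"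
    unfolding lattice_points_def by auto
  then obtain a b c where "y $ 1 = of_int a" "y $ 2 = of_int b" "y $ 3 = of_int c"
    by (metis Ints_cases)
  then have "y = vec3 (a, b, c)"
    by (simp add: vec_eq_iff forall_3)
  then show "y \<in> range vec3"
    by blast
next
  fix y :: "real^3" assume "y \<in> range vec3"
  then show "y \<in> lattice_points"
    unfolding lattice_points_def by (auto simp: forall_3)
qed

lemma lattice_points_scaled_square:
  fixes u v :: ivec and N :: int and t :: nat
  assumes "dot u v = 0" and "dot u u = N" and "dot v v = N" and "N > 0" and "t > 0"
  shows "(\<lambda>x. real t *\<^sub>R x) ` (convex hull {0, vec3 u, vec3 v, vec3 u + vec3 v}) \<inter> lattice_points
    = vec3 ` {x. dot x (cross v u) = 0 \<and> 0 \<le> dot x u \<and> dot x u \<le> int t * N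
                \<and> 0 \<le> dot x v \<and> dot x v \<le> int t * N}"
proof -
  have "vec3 x \<in> (\<lambda>x. real t *\<^sub>R x) ` (convex hull {0, vec3 u, vec3 v, vec3 u + vec3 v})
    \<longleftrightarrow> smul N x = smul (dot x u) u + smul (dot x v) v
        \<and> 0 \<le> dot x u \<and> dot x u \<le> int t * N \<and> 0 \<le> dot x v \<and> dot x v \<le> int t * N" for x
  proof -
    have "real t * of_int N = of_int (int t * N)"
      by simp
    moreover have "of_int N *\<^sub>R vec3 x = of_int (dot x u) *\<^sub>R vec3 u + of_int (dot x v) *\<^sub>R vec3 v
      \<longleftrightarrow> smul N x = smul (dot x u) u + smul (dot x v) v"
      by (simp only: vec3_smul[symmetric] vec3_add[symmetric] inj_eq[OF inj_vec3])
    ultimately show ?thesis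
      using in_scaled_square_iff[of "vec3 u" "vec3 v" "of_int N" "real t" "vec3 x"] assms
      by (simp only: inner_vec3 of_int_le_iff of_int_0_le_iff of_int_0_less_iff of_nat_0_less_iff)
  qed
  then have "vec3 x \<in> (\<lambda>x. real t *\<^sub>R x) ` (convex hull {0, vec3 u, vec3 v, vec3 u + vec3 v})
    \<longleftrightarrow> dot x (cross v u) = 0
        \<and> 0 \<le> dot x u \<and> dot x u \<le> int t * N \<and> 0 \<le> dot x v \<and> dot x v \<le> int t * N" for x
    using in_plane_iff[OF assms(1-3)] assms(4) by simp
  then have "vec3 -` (\<lambda>x. real t *\<^sub>R x) ` (convex hull {0, vec3 u, vec3 v, vec3 u + vec3 v})
    = {x. dot x (cross v u) = 0 \<and> 0 \<le> dot x u \<and> dot x u \<le> int t * N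
          \<and> 0 \<le> dot x v \<and> dot x v \<le> int t * N}"
    by (simp add: set_eq_iff del: vec3.simps)
  then show ?thesis
    unfolding lattice_points_eq_range_vec3 image_vimage_eq[symmetric] by simp
qed

lemma ehrhart_poly_eqI:
  assumes "\<And>t. t > 0 \<Longrightarrow> poly p (real t) = real (card ((\<lambda>x. real t *\<^sub>R x) ` P \<inter> lattice_points))"
  shows "ehrhart_poly P = p"
  unfolding ehrhart_poly_def
proof (rule the_equality)
  show "\<forall>t. t > 0 \<longrightarrow> poly p (real t) = real (card ((\<lambda>x. real t *\<^sub>R x) ` P \<inter> lattice_points))"
    using assms by blast
next
  fix q assume q: "\<forall>t. t > 0 \<longrightarrow> poly q (real t) = real (card ((\<lambda>x. real t *\<^sub>R x) ` P \<inter> lattice_points))"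
  have "range (\<lambda>n. real (Suc n)) \<subseteq> {x. poly (q - p) x = 0}"
    using q assms by (auto simp del: of_nat_Suc)
  moreover have "infinite (range (\<lambda>n. real (Suc n)))"
    by (rule range_inj_infinite) (simp add: inj_def)
  ultimately have "q - p = 0"
    using poly_roots_finite finite_subset by blast
  then show "q = p"
    by simp
qed

theorem ehrhart_poly_lattice_square:
  assumes "u \<noteq> 0" and "v \<noteq> 0" and "dot u v = 0" and "dot u u = dot v v"
  shows "ehrhart_poly (convex hull {0, vec3 u, vec3 v, vec3 u + vec3 v})
    = [:1, of_int (vgcd u + vgcd v), of_int (vgcd (cross v u)):]"
proof (rule ehrhart_poly_eqI)
  fix t :: nat assume "t > 0"
  define N where "N = dot u u"
  have "N > 0"
    unfolding N_def using assms(1) by (rule dot_self_pos)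
  have "card ((\<lambda>x. real t *\<^sub>R x) ` (convex hull {0, vec3 u, vec3 v, vec3 u + vec3 v}) \<inter> lattice_points)
    = card {x. dot x (cross v u) = 0 \<and> 0 \<le> dot x u \<and> dot x u \<le> int t * N
               \<and> 0 \<le> dot x v \<and> dot x v \<le> int t * N}"
    unfolding lattice_points_scaled_square[OF assms(3) N_def[symmetric]
        assms(4)[folded N_def, symmetric] \<open>N > 0\<close> \<open>t > 0\<close>]
    by (rule card_image[OF inj_on_subset[OF inj_vec3 subset_UNIV]])
  also have "int \<dots> = int t ^ 2 * vgcd (cross v u) + int t * (vgcd u + vgcd v) + 1"
    by (rule card_lattice_square[OF assms(1-3) N_def[symmetric] assms(4)[folded N_def, symmetric]]) simp
  finally have "real (card ((\<lambda>x. real t *\<^sub>R x) ` (convex hull {0, vec3 u, vec3 v, vec3 u + vec3 v}) \<inter> lattice_points))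
    = of_int (int t ^ 2 * vgcd (cross v u) + int t * (vgcd u + vgcd v) + 1)"
    by (metis of_int_of_nat_eq)
  then show "poly [:1, of_int (vgcd u + vgcd v), of_int (vgcd (cross v u)):] (real t)
    = real (card ((\<lambda>x. real t *\<^sub>R x) ` (convex hull {0, vec3 u, vec3 v, vec3 u + vec3 v}) \<inter> lattice_points))"
    by (simp add: algebra_simps power2_eq_square)
qed

theorem theorem2p2:
  fixes a b c a' b' c' :: int
  assumes "(a, b, c) \<noteq> (0, 0, 0)"
    and "(a', b', c') \<noteq> (0, 0, 0)"
    and "a^2 + b^2 + c^2 = a'^2 + b'^2 + c'^2"
    and "a * a' + b * b' + c * c' = 0"
    and "Gcd {a, b, c, a', b', c'} = 1"
  shows "ehrhart_poly (convex hull {0, int_vec3 a b c, int_vec3 a' b' c',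
                                    int_vec3 a b c + int_vec3 a' b' c'})
         = [: 1, of_int (Gcd {a, b, c} + Gcd {a', b', c'}),
              of_int (Gcd {b * c' - b' * c, a * c' - a' * c, a * b' - a' * b}) :]"
proof -
  define u v :: ivec where "u = (a, b, c)" and "v = (a', b', c')"
  have "u \<noteq> 0" "v \<noteq> 0" "dot u v = 0" "dot u u = dot v v"
    using assms(1-4) unfolding u_def v_def by (simp_all add: power2_eq_square)
  have "b' * c - c' * b = - (b * c' - b' * c)" "c' * a - a' * c = a * c' - a' * c"
    "a' * b - b' * a = - (a * b' - a' * b)"
    by simp_all
  then have "vgcd (cross v u) = Gcd {b * c' - b' * c, a * c' - a' * c, a * b' - a' * b}"
    unfolding u_def v_def by (simp only: cross.simps vgcd.simps gcd_neg1 gcd_neg2) simp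
  moreover have "vgcd u = Gcd {a, b, c}" "vgcd v = Gcd {a', b', c'}"
    "vec3 u = int_vec3 a b c" "vec3 v = int_vec3 a' b' c'"
    unfolding u_def v_def by simp_all
  ultimately show ?thesis
    using ehrhart_poly_lattice_square[OF \<open>u \<noteq> 0\<close> \<open>v \<noteq> 0\<close> \<open>dot u v = 0\<close> \<open>dot u u = dot v v\<close>]
    by (simp only:)
qed

end
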